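(* Let $X$ be a convex metric space over a Boolean ring $B$ which is a convex closure of a subset $H\subseteq X$ with $0\in H$, and let $f:X\to Y$ be a contractive map into a metric space $Y$ over $B$ with $f(0)=0'$. Then $f^{-1}(0')$ equals the set of all convex combinations (in $X$) of elements of $\{0\}\cup\{\overline{d'(0',f(x))}\,x : x\in H\}$, where for $a\in B$ and $x\in X$, $ax$ denotes the convex combination of $x,0$ with coefficients $a,\bar a$.
   Context: $B$ is a Boolean ring ($a\vee b=a+b+ab$, $a\le b\iff ab=a$, $\bar a=1+a$; $a_1\oplus\cdots\oplus a_n$ denotes a sum of pairwise disjoint elements). A Boolean metric space over $B$: set $X$ with $d:X\times X\to B$, $d(x,y)=0\iff x=y$, symmetric, $d(x,z)\le d(x,y)\vee d(y,z)$. For $x_1,\dots,x_n\in X$, $a_i\in B$ with $a_1\oplus\cdots\oplus a_n=1$, $x$ is a convex combination of the $x_i$ with coefficients $a_i$ if $a_id(x,x_i)=0$ for all $i$; $X$ is convex if all such combinations exist; $X$ is a convex closure of $H\subseteq X$ if $X$ is convex and every element of $X$ is a convex combination of elements of $H$. $d'$ is the metric of $Y$. A map is contractive if $d'(f(x),f(y))\le d(x,y)$. *)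

theory Defs
  imports Main
begin

text \<open>The Boolean ring B (with unit) is modelled as a Boolean algebra 'b:
 ring product = inf, a \<vee> b = sup, ring zero/one = bot/top, complement = uminus,
 a \<le> b iff ab = a is the lattice order. For pairwise disjoint elements the ring sum
 coincides with the join.\<close>

primrec bsum :: "(nat \<Rightarrow> 'b::boolean_algebra) \<Rightarrow> nat \<Rightarrow> 'b" where
  "bsum a 0 = bot"
| "bsum a (Suc n) = sup (bsum a n) (a n)"

definition partition_of_unity :: "nat \<Rightarrow> (nat \<Rightarrow> 'b::boolean_algebra) \<Rightarrow> bool" where
  "partition_of_unity n a \<longleftrightarrow>
     (\<forall>i<n. \<forall>j<n. i \<noteq> j \<longrightarrow> inf (a i) (a j) = bot) \<and> bsum a n = top"

definition bool_metric :: "'a set \<Rightarrow> ('a \<Rightarrow> 'a \<Rightarrow> 'b::boolean_algebra) \<Rightarrow> bool" where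
  "bool_metric X d \<longleftrightarrow>
     (\<forall>x\<in>X. \<forall>y\<in>X. d x y = bot \<longleftrightarrow> x = y) \<and>
     (\<forall>x\<in>X. \<forall>y\<in>X. d x y = d y x) \<and>
     (\<forall>x\<in>X. \<forall>y\<in>X. \<forall>z\<in>X. d x z \<le> sup (d x y) (d y z))"

definition conv_comb ::
  "'a set \<Rightarrow> ('a \<Rightarrow> 'a \<Rightarrow> 'b::boolean_algebra) \<Rightarrow> 'a \<Rightarrow> nat \<Rightarrow> (nat \<Rightarrow> 'a) \<Rightarrow> (nat \<Rightarrow> 'b) \<Rightarrow> bool" where
  "conv_comb X d x n xs a \<longleftrightarrow>
     x \<in> X \<and> (\<forall>i<n. xs i \<in> X) \<and> partition_of_unity n a \<and>
     (\<forall>i<n. inf (a i) (d x (xs i)) = bot)"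

definition bool_convex :: "'a set \<Rightarrow> ('a \<Rightarrow> 'a \<Rightarrow> 'b::boolean_algebra) \<Rightarrow> bool" where
  "bool_convex X d \<longleftrightarrow>
     (\<forall>n xs a. (\<forall>i<n. xs i \<in> X) \<and> partition_of_unity n a \<longrightarrow>
        (\<exists>x. conv_comb X d x n xs a))"

definition convex_combs ::
  "'a set \<Rightarrow> ('a \<Rightarrow> 'a \<Rightarrow> 'b::boolean_algebra) \<Rightarrow> 'a set \<Rightarrow> 'a set" where
  "convex_combs X d S = {x. \<exists>n xs a. (\<forall>i<n. xs i \<in> S) \<and> conv_comb X d x n xs a}"

definition convex_closure_of ::
  "'a set \<Rightarrow> ('a \<Rightarrow> 'a \<Rightarrow> 'b::boolean_algebra) \<Rightarrow> 'a set \<Rightarrow> bool" where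
  "convex_closure_of X d H \<longleftrightarrow> H \<subseteq> X \<and> bool_convex X d \<and> X \<subseteq> convex_combs X d H"

definition contractive ::
  "'a set \<Rightarrow> ('a \<Rightarrow> 'a \<Rightarrow> 'b::boolean_algebra) \<Rightarrow> ('c \<Rightarrow> 'c \<Rightarrow> 'b) \<Rightarrow> ('a \<Rightarrow> 'c) \<Rightarrow> bool" where
  "contractive X d d' f \<longleftrightarrow> (\<forall>x\<in>X. \<forall>y\<in>X. d' (f x) (f y) \<le> d x y)"

text \<open>a x: the convex combination of x, z (z = the point 0) with coefficients a, -a
 (unique in a Boolean metric space)\<close>
definition smul ::
  "'a set \<Rightarrow> ('a \<Rightarrow> 'a \<Rightarrow> 'b::boolean_algebra) \<Rightarrow> 'a \<Rightarrow> 'b \<Rightarrow> 'a \<Rightarrow> 'a" where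
  "smul X d z a x = (THE y. conv_comb X d y 2 (\<lambda>i. if i = 0 then x else z)
                                            (\<lambda>i. if i = 0 then a else - a))"

end

theory Submission
  imports Defs
begin

text \<open>
  Write \<open>e h = d'(z', f h)\<close> and \<open>w h = (-e h) h\<close>, the convex
  combination of \<open>h\<close> and \<open>z\<close> with coefficients \<open>-e h\<close>, \<open>e h\<close>.  Contractivity gives
  \<open>a\<^sub>i d'(f x, f x\<^sub>i) = 0\<close> whenever \<open>x\<close> is a convex combination of the \<open>x\<^sub>i\<close> with
  coefficients \<open>a\<^sub>i\<close>, and a partition of unity that annihilates an element forces it
  to be \<open>0\<close>.  Hence:
  (1) point preimages of \<open>f\<close> are closed under convex combinations;
  (2) \<open>f (w h) = z'\<close>, since \<open>e h\<close> kills \<open>d'(z', f(w h)) \<le> d(w h, z)\<close> and \<open>-e h\<close>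
      kills it via \<open>d'(z', f(w h)) \<le> e h \<or> d(h, w h)\<close>;
  (3) if \<open>f x = z'\<close> and \<open>x\<close> is a combination of \<open>h\<^sub>i \<in> H\<close> with coefficients \<open>a\<^sub>i\<close>,
      then \<open>a\<^sub>i \<le> -e h\<^sub>i\<close>, so \<open>w h\<^sub>i\<close> agrees with \<open>h\<^sub>i\<close> on \<open>a\<^sub>i\<close> and \<open>x\<close> is also the
      combination of the \<open>w h\<^sub>i\<close> with the same coefficients.
\<close>

lemma disjoint_compl_pair_bot:
  fixes e c :: "'b::boolean_algebra"
  assumes "inf e c = bot" "inf (- e) c = bot" shows "c = bot"
proof -
  have "c = inf (sup e (- e)) c" by simp
  also have "\<dots> = sup (inf e c) (inf (- e) c)" by (rule inf_sup_distrib2)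
  finally show ?thesis using assms by simp
qed

lemma disjoint_below_sup:
  fixes a c p q :: "'b::boolean_algebra"
  assumes "c \<le> sup p q" "inf a p = bot" "inf a q = bot" shows "inf a c = bot"
proof -
  have "inf a c \<le> inf a (sup p q)" using assms(1) inf_mono by blast
  also have "\<dots> = sup (inf a p) (inf a q)" by (rule inf_sup_distrib1)
  finally show ?thesis using assms by (simp add: bot_unique)
qed

lemma disjoint_below:
  fixes a c p :: "'b::boolean_algebra"
  assumes "c \<le> p" "inf a p = bot" shows "inf a c = bot"
  using disjoint_below_sup[of c p p a] assms by simp

lemma partition_of_unity_annihilates:
  fixes a :: "nat \<Rightarrow> 'b::boolean_algebra"
  assumes "partition_of_unity n a" "\<forall>i<n. inf (a i) c = bot" shows "c = bot"
proof -
  have "inf (bsum a n) c = bot" using assms(2) by (induction n) (auto simp: inf_sup_distrib2)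
  thus ?thesis using assms(1) unfolding partition_of_unity_def by simp
qed

lemma bool_metric_zero_iff:
  "bool_metric X d \<Longrightarrow> x \<in> X \<Longrightarrow> y \<in> X \<Longrightarrow> d x y = bot \<longleftrightarrow> x = y"
  unfolding bool_metric_def by blast

lemma bool_metric_sym:
  "bool_metric X d \<Longrightarrow> x \<in> X \<Longrightarrow> y \<in> X \<Longrightarrow> d x y = d y x"
  unfolding bool_metric_def by blast

lemma bool_metric_triangle:
  "bool_metric X d \<Longrightarrow> x \<in> X \<Longrightarrow> y \<in> X \<Longrightarrow> w \<in> X \<Longrightarrow> d x w \<le> sup (d x y) (d y w)"
  unfolding bool_metric_def by blast

text \<open>Convex combinations are unique: the coefficients jointly annihilate \<open>d(x,y)\<close>.\<close>
lemma conv_comb_unique: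
  assumes m: "bool_metric X d" and x: "conv_comb X d x n xs a" and y: "conv_comb X d y n xs a"
  shows "x = y"
proof -
  have "inf (a i) (d x y) = bot" if i: "i < n" for i
  proof (rule disjoint_below_sup)
    show "d x y \<le> sup (d x (xs i)) (d (xs i) y)"
      using x y i bool_metric_triangle[OF m] unfolding conv_comb_def by blast
    show "inf (a i) (d x (xs i)) = bot" using x i unfolding conv_comb_def by blast
    show "inf (a i) (d (xs i) y) = bot"
      using y i bool_metric_sym[OF m] unfolding conv_comb_def by metis
  qed
  hence "d x y = bot" using x partition_of_unity_annihilates unfolding conv_comb_def by blast
  thus ?thesis using x y bool_metric_zero_iff[OF m] unfolding conv_comb_def by blast
qed

lemma conv_comb_replace_points:
  assumes m: "bool_metric X d" and x: "conv_comb X d x n xs a"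
    and ys: "\<forall>i<n. ys i \<in> X" and near: "\<forall>i<n. inf (a i) (d (xs i) (ys i)) = bot"
  shows "conv_comb X d x n ys a"
proof -
  have "inf (a i) (d x (ys i)) = bot" if i: "i < n" for i
  proof (rule disjoint_below_sup)
    show "d x (ys i) \<le> sup (d x (xs i)) (d (xs i) (ys i))"
      using x ys i bool_metric_triangle[OF m] unfolding conv_comb_def by blast
  qed (use x near i in \<open>auto simp: conv_comb_def\<close>)
  thus ?thesis using x ys unfolding conv_comb_def by blast
qed

lemma conv_comb_contractive_image:
  assumes f: "contractive X d d' f" and x: "conv_comb X d x n xs a" and i: "i < n"
  shows "inf (a i) (d' (f x) (f (xs i))) = bot"
  using disjoint_below[of "d' (f x) (f (xs i))" "d x (xs i)" "a i"] x i f
  unfolding conv_comb_def contractive_def by blast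

lemma preimage_conv_comb_closed:
  assumes m: "bool_metric X d" and m': "bool_metric Y d'" and f: "contractive X d d' f"
    and fX: "f ` X \<subseteq> Y" and p: "p \<in> Y"
    and x: "conv_comb X d x n xs a" and pts: "\<forall>i<n. f (xs i) = p"
  shows "f x = p"
proof -
  have "\<forall>i<n. inf (a i) (d' (f x) p) = bot"
    using conv_comb_contractive_image[OF f x] pts by auto
  hence "d' (f x) p = bot" using x partition_of_unity_annihilates unfolding conv_comb_def by blast
  thus ?thesis using x fX p bool_metric_zero_iff[OF m'] unfolding conv_comb_def by blast
qed

lemma smul_props:
  fixes d :: "'a \<Rightarrow> 'a \<Rightarrow> 'b::boolean_algebra"
  assumes m: "bool_metric X d" and c: "bool_convex X d" and x: "x \<in> X" and z: "z \<in> X"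
  shows "smul X d z a x \<in> X" and "inf a (d (smul X d z a x) x) = bot"
    and "inf (- a) (d (smul X d z a x) z) = bot"
proof -
  let ?xs = "\<lambda>i::nat. if i = 0 then x else z" and ?a = "\<lambda>i::nat. if i = 0 then a else - a"
  let ?P = "\<lambda>y. conv_comb X d y 2 ?xs ?a"
  have "partition_of_unity 2 ?a"
    unfolding partition_of_unity_def numeral_2_eq_2 by (auto simp: less_Suc_eq inf_commute)
  hence "\<exists>y. ?P y" using c x z unfolding bool_convex_def by auto
  hence "\<exists>!y. ?P y" using conv_comb_unique[OF m] by blast
  hence "?P (smul X d z a x)" unfolding smul_def by (rule theI')
  thus "smul X d z a x \<in> X" "inf a (d (smul X d z a x) x) = bot"
    "inf (- a) (d (smul X d z a x) z) = bot"
    unfolding conv_comb_def numeral_2_eq_2 by auto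
qed

lemma contractive_smul_to_base:
  assumes m: "bool_metric X d" and c: "bool_convex X d" and m': "bool_metric Y d'"
    and f: "contractive X d d' f" and fX: "f ` X \<subseteq> Y" and z: "z \<in> X" and h: "h \<in> X"
  shows "f (smul X d z (- d' (f z) (f h)) h) = f z"
proof -
  let ?e = "d' (f z) (f h)" and ?w = "smul X d z (- d' (f z) (f h)) h"
  have w: "?w \<in> X" and near_h: "inf (- ?e) (d ?w h) = bot" and near_z: "inf ?e (d ?w z) = bot"
    using smul_props[OF m c h z, of "- ?e"] by simp_all
  have Y: "f z \<in> Y" "f h \<in> Y" "f ?w \<in> Y" using fX z h w by auto
  have contr: "d' (f ?w) (f h) \<le> d ?w h" "d' (f ?w) (f z) \<le> d ?w z"
    using f w h z unfolding contractive_def by blast+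
  have "inf ?e (d' (f z) (f ?w)) = bot"
    using disjoint_below[OF contr(2) near_z] bool_metric_sym[OF m' Y(1) Y(3)] by simp
  moreover have "inf (- ?e) (d' (f z) (f ?w)) = bot"
  proof (rule disjoint_below_sup)
    show "d' (f z) (f ?w) \<le> sup ?e (d' (f h) (f ?w))" using bool_metric_triangle[OF m' Y] .
    show "inf (- ?e) (d' (f h) (f ?w)) = bot"
      using disjoint_below[OF contr(1) near_h] bool_metric_sym[OF m' Y(2) Y(3)] by simp
  qed simp
  ultimately have "d' (f z) (f ?w) = bot" by (rule disjoint_compl_pair_bot)
  thus ?thesis using bool_metric_zero_iff[OF m' Y(1) Y(3)] by simp
qed

text \<open>Step (3): on the part where \<open>f x\<close> and \<open>f h\<close> agree, the point \<open>(-d'(f x, f h)) h\<close>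
  agrees with \<open>h\<close>.\<close>
lemma smul_agrees_on_coefficient:
  assumes m: "bool_metric X d" and c: "bool_convex X d" and z: "z \<in> X" and h: "h \<in> X"
    and b: "inf b e = bot"
  shows "inf b (d h (smul X d z (- e) h)) = bot"
proof -
  have "b \<le> - e" using b by (simp add: inf_shunt)
  hence "inf b (d (smul X d z (- e) h) h) = bot"
    using smul_props(2)[OF m c h z, of "- e"] by (metis inf.absorb1 inf.assoc inf_bot_right)
  thus ?thesis using bool_metric_sym[OF m h smul_props(1)[OF m c h z, of "- e"]] by simp
qed

theorem mainTheorem20:
  fixes X :: "'a set" and d :: "'a \<Rightarrow> 'a \<Rightarrow> 'b::boolean_algebra"
    and Y :: "'c set" and d' :: "'c \<Rightarrow> 'c \<Rightarrow> 'b"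
    and H :: "'a set" and z :: 'a and z' :: 'c and f :: "'a \<Rightarrow> 'c"
  assumes "bool_metric X d"
    and "convex_closure_of X d H"
    and "z \<in> H"
    and "bool_metric Y d'"
    and "z' \<in> Y"
    and "f ` X \<subseteq> Y"
    and "contractive X d d' f"
    and "f z = z'"
  shows "{x \<in> X. f x = z'} =
           convex_combs X d (insert z {smul X d z (- d' z' (f x)) x | x. x \<in> H})"
proof -
  note m = assms(1) and m' = assms(4) and f = assms(7)
  have HX: "H \<subseteq> X" and c: "bool_convex X d" and cl: "X \<subseteq> convex_combs X d H"
    using assms(2) unfolding convex_closure_of_def by auto
  have z: "z \<in> X" using HX assms(3) by auto
  define w where "w h = smul X d z (- d' z' (f h)) h" for h
  have w: "w h \<in> X" "f (w h) = z'" if "h \<in> H" for h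
    using smul_props(1)[OF m c _ z] contractive_smul_to_base[OF m c m' f assms(6) z]
      that HX assms(8) unfolding w_def by auto
  let ?S = "insert z {w h | h. h \<in> H}"
  have "x \<in> convex_combs X d ?S" if x: "x \<in> X" "f x = z'" for x
  proof -
    obtain n hs a where hs: "\<forall>i<n. hs i \<in> H" and comb: "conv_comb X d x n hs a"
      using cl x unfolding convex_combs_def by auto
    have "\<forall>i<n. inf (a i) (d (hs i) (w (hs i))) = bot"
      using smul_agrees_on_coefficient[OF m c z] conv_comb_contractive_image[OF f comb]
        hs HX x(2) unfolding w_def by blast
    hence "conv_comb X d x n (w \<circ> hs) a"
      using conv_comb_replace_points[OF m comb] hs w by auto
    moreover have "\<forall>i<n. (w \<circ> hs) i \<in> ?S" using hs by auto
    ultimately show ?thesis unfolding convex_combs_def by blast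
  qed
  moreover have "x \<in> X \<and> f x = z'" if x: "x \<in> convex_combs X d ?S" for x
  proof -
    obtain n xs a where "\<forall>i<n. xs i \<in> ?S" and comb: "conv_comb X d x n xs a"
      using x unfolding convex_combs_def by blast
    hence "\<forall>i<n. f (xs i) = z'" using w assms(8) by auto
    thus ?thesis using preimage_conv_comb_closed[OF m m' f assms(6,5) comb] comb
      unfolding conv_comb_def by blast
  qed
  ultimately show ?thesis unfolding w_def by blast
qed

end
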